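(* (Zig Zag Lemma.) Let $\sigma : X^* \to M$ be a monoid choice of generators for a monoid $M$, let $x, y \in M$, let $n \geq 1$ and let $u_0, \dots, u_{n-1}, v_1, \dots, v_n \in X^*$. Then the following are equivalent: (i) the loop automaton of $M$ with respect to $\sigma$ has a path from $x$ to $y$ labelled $u_0 \overline{v_1} u_1 \overline{v_2} \cdots u_{n-1}\overline{v_n}$; (ii) there exist $p_0, \dots, p_n \in M$ with $p_0 = x$, $p_n = y$, and $p_i(u_i\sigma) = p_{i+1}(v_{i+1}\sigma)$ for $0 \leq i < n$.
   Context: Maps are written on the right. $X^*$ is the free monoid on $X$; a choice of generators is a surjective monoid morphism. Let $\overline{X} = \{\overline{x} : x \in X\}$ be new symbols, $\hat{X} = X \cup \overline{X}$, and extend $x \mapsto \overline{x}$ to an involution of $\hat{X}^*$ by $\overline{\overline{x}} = x$, $\overline{x_1\cdots x_n} = \overline{x_n}\cdots\overline{x_1}$. The loop automaton of $M$ w.r.t. $\sigma$ is the directed labelled graph with vertex set $M$ having, for each $a \in M$, $x \in X$, an edge $a \to a(x\sigma)$ labelled $x$ and an edge $a(x\sigma) \to a$ labelled $\overline{x}$; path labels are concatenations of edge labels. *)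

theory Defs
  imports Main
begin

text \<open>Letters of the doubled alphabet: Pos x is x, Neg x is the barred symbol.\<close>
datatype 'x letter = Pos 'x | Neg 'x

fun bar_letter :: "'x letter \<Rightarrow> 'x letter" where
  "bar_letter (Pos x) = Neg x"
| "bar_letter (Neg x) = Pos x"

definition bar_word :: "'x letter list \<Rightarrow> 'x letter list" where
  "bar_word w = rev (map bar_letter w)"

definition emb :: "'x list \<Rightarrow> 'x letter list" where
  "emb w = map Pos w"

text \<open>Monoid morphism from the free monoid (lists) to M; maps written on the right,
  so a(w sigma) is a * sigma w.\<close>
definition monoid_morphism :: "('x list \<Rightarrow> 'm::monoid_mult) \<Rightarrow> bool" where
  "monoid_morphism \<sigma> \<longleftrightarrow> \<sigma> [] = 1 \<and> (\<forall>u v. \<sigma> (u @ v) = \<sigma> u * \<sigma> v)"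

definition choice_of_generators :: "('x list \<Rightarrow> 'm::monoid_mult) \<Rightarrow> bool" where
  "choice_of_generators \<sigma> \<longleftrightarrow> monoid_morphism \<sigma> \<and> surj \<sigma>"

inductive loop_edge :: "('x list \<Rightarrow> 'm::monoid_mult) \<Rightarrow> 'm \<Rightarrow> 'x letter \<Rightarrow> 'm \<Rightarrow> bool"
  for \<sigma> where
  fwd: "loop_edge \<sigma> a (Pos x) (a * \<sigma> [x])"
| bwd: "loop_edge \<sigma> (a * \<sigma> [x]) (Neg x) a"

inductive loop_path :: "('x list \<Rightarrow> 'm::monoid_mult) \<Rightarrow> 'm \<Rightarrow> 'x letter list \<Rightarrow> 'm \<Rightarrow> bool"
  for \<sigma> where
  nil: "loop_path \<sigma> a [] a"
| cons: "loop_edge \<sigma> a l c \<Longrightarrow> loop_path \<sigma> c w b \<Longrightarrow> loop_path \<sigma> a (l # w) b"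

definition zigzag_word :: "nat \<Rightarrow> (nat \<Rightarrow> 'x list) \<Rightarrow> (nat \<Rightarrow> 'x list) \<Rightarrow> 'x letter list" where
  "zigzag_word n u v = concat (map (\<lambda>i. emb (u i) @ bar_word (emb (v (Suc i)))) [0..<n])"

end

theory Submission
  imports Defs
begin

text \<open>A path labelled by a word w of X* from a ends at a(w\<sigma>), and a path labelled by
  bar(w) runs the same edges backwards. So a path labelled by the zig-zag word passes through
  points p_0 = x, ..., p_n = y, the block u_i bar(v_(i+1)) leading from p_i to p_(i+1); and such a
  block leads from a to b exactly when its two halves meet, i.e. a(u_i\<sigma>) = b(v_(i+1)\<sigma>).\<close>

lemma monoid_morphism_Nil: "monoid_morphism \<sigma> \<Longrightarrow> \<sigma> [] = 1"
  unfolding monoid_morphism_def by blast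

lemma monoid_morphism_Cons: "monoid_morphism \<sigma> \<Longrightarrow> \<sigma> (x # w) = \<sigma> [x] * \<sigma> w"
  unfolding monoid_morphism_def by (metis append_Cons append_Nil)

lemma loop_edge_Pos_iff: "loop_edge \<sigma> a (Pos x) c \<longleftrightarrow> c = a * \<sigma> [x]"
  by (auto elim: loop_edge.cases intro: loop_edge.intros)

lemma loop_edge_Neg_iff: "loop_edge \<sigma> a (Neg x) c \<longleftrightarrow> a = c * \<sigma> [x]"
  by (auto elim: loop_edge.cases intro: loop_edge.intros)

lemma loop_path_Nil_iff: "loop_path \<sigma> a [] b \<longleftrightarrow> a = b"
  by (auto elim: loop_path.cases intro: loop_path.intros)

lemma loop_path_Cons_iff:
  "loop_path \<sigma> a (l # w) b \<longleftrightarrow> (\<exists>c. loop_edge \<sigma> a l c \<and> loop_path \<sigma> c w b)"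
  by (auto elim: loop_path.cases intro: loop_path.intros)

lemma loop_path_append_iff:
  "loop_path \<sigma> a (w1 @ w2) b \<longleftrightarrow> (\<exists>c. loop_path \<sigma> a w1 c \<and> loop_path \<sigma> c w2 b)"
  by (induction w1 arbitrary: a) (auto simp: loop_path_Nil_iff loop_path_Cons_iff)

lemma loop_path_emb_iff:
  assumes "monoid_morphism \<sigma>"
  shows "loop_path \<sigma> a (emb w) b \<longleftrightarrow> b = a * \<sigma> w"
proof (induction w arbitrary: a)
  case Nil
  show ?case
    by (auto simp: emb_def loop_path_Nil_iff monoid_morphism_Nil[OF assms])
next
  case (Cons x w)
  then show ?case
    by (simp add: emb_def loop_path_Cons_iff loop_edge_Pos_iff mult.assoc
        monoid_morphism_Cons[OF assms, of x w])
qed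

lemma loop_path_bar_emb_iff:
  assumes "monoid_morphism \<sigma>"
  shows "loop_path \<sigma> a (bar_word (emb w)) b \<longleftrightarrow> a = b * \<sigma> w"
proof (induction w arbitrary: a rule: rev_induct)
  case Nil
  show ?case
    by (auto simp: emb_def bar_word_def loop_path_Nil_iff monoid_morphism_Nil[OF assms])
next
  case (snoc x w)
  have "\<sigma> (w @ [x]) = \<sigma> w * \<sigma> [x]"
    using assms by (simp add: monoid_morphism_def)
  with snoc show ?case
    by (simp add: emb_def bar_word_def loop_path_Cons_iff loop_edge_Neg_iff mult.assoc)
qed

lemma loop_path_zigzag_block_iff:
  assumes "monoid_morphism \<sigma>"
  shows "loop_path \<sigma> a (emb u @ bar_word (emb v)) b \<longleftrightarrow> a * \<sigma> u = b * \<sigma> v"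
  by (auto simp: loop_path_append_iff loop_path_emb_iff[OF assms] loop_path_bar_emb_iff[OF assms])

lemma zigzag_word_Suc:
  "zigzag_word (Suc n) u v = zigzag_word n u v @ emb (u n) @ bar_word (emb (v (Suc n)))"
  by (simp add: zigzag_word_def)

lemma ex_chain_Suc_iff:
  "(\<exists>p. p 0 = x \<and> p (Suc n) = y \<and> (\<forall>i<Suc n. R i (p i) (p (Suc i)))) \<longleftrightarrow>
   (\<exists>c. (\<exists>p. p 0 = x \<and> p n = c \<and> (\<forall>i<n. R i (p i) (p (Suc i)))) \<and> R n c y)"
proof
  assume "\<exists>p. p 0 = x \<and> p (Suc n) = y \<and> (\<forall>i<Suc n. R i (p i) (p (Suc i)))"
  then obtain p where "p 0 = x" "p (Suc n) = y" "\<forall>i<Suc n. R i (p i) (p (Suc i))"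
    by blast
  then show "\<exists>c. (\<exists>p. p 0 = x \<and> p n = c \<and> (\<forall>i<n. R i (p i) (p (Suc i)))) \<and> R n c y"
    by (intro exI[of _ "p n"] conjI exI[of _ p]) auto
next
  assume "\<exists>c. (\<exists>p. p 0 = x \<and> p n = c \<and> (\<forall>i<n. R i (p i) (p (Suc i)))) \<and> R n c y"
  then obtain p where p: "p 0 = x" "\<forall>i<n. R i (p i) (p (Suc i))" "R n (p n) y"
    by blast
  let ?q = "p(Suc n := y)"
  have "\<forall>i<Suc n. R i (?q i) (?q (Suc i))"
    using p by (auto simp: less_Suc_eq)
  with p show "\<exists>p. p 0 = x \<and> p (Suc n) = y \<and> (\<forall>i<Suc n. R i (p i) (p (Suc i)))"
    by (intro exI[of _ ?q]) simp
qed

lemma loop_path_zigzag_word_iff: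
  assumes "monoid_morphism \<sigma>"
  shows "loop_path \<sigma> x (zigzag_word n u v) y \<longleftrightarrow>
    (\<exists>p. p 0 = x \<and> p n = y \<and> (\<forall>i<n. p i * \<sigma> (u i) = p (Suc i) * \<sigma> (v (Suc i))))"
proof (induction n arbitrary: y)
  case 0
  then show ?case by (auto simp: zigzag_word_def loop_path_Nil_iff)
next
  case (Suc n)
  have "loop_path \<sigma> x (zigzag_word (Suc n) u v) y \<longleftrightarrow>
    (\<exists>c. loop_path \<sigma> x (zigzag_word n u v) c \<and> c * \<sigma> (u n) = y * \<sigma> (v (Suc n)))"
    unfolding zigzag_word_Suc loop_path_append_iff[of _ _ "zigzag_word n u v"]
    by (simp only: loop_path_zigzag_block_iff[OF assms])
  also have "\<dots> \<longleftrightarrow> (\<exists>p. p 0 = x \<and> p (Suc n) = y \<and>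
      (\<forall>i<Suc n. p i * \<sigma> (u i) = p (Suc i) * \<sigma> (v (Suc i))))"
    unfolding Suc.IH
    by (rule ex_chain_Suc_iff[where R = "\<lambda>i a b. a * \<sigma> (u i) = b * \<sigma> (v (Suc i))", symmetric])
  finally show ?case .
qed

theorem lemma4p1:
  fixes \<sigma> :: "'x list \<Rightarrow> 'm::monoid_mult"
    and x y :: 'm and n :: nat and u v :: "nat \<Rightarrow> 'x list"
  assumes "choice_of_generators \<sigma>"
    and "n \<ge> 1"
  shows "loop_path \<sigma> x (zigzag_word n u v) y \<longleftrightarrow>
    (\<exists>p :: nat \<Rightarrow> 'm. p 0 = x \<and> p n = y \<and>
       (\<forall>i<n. p i * \<sigma> (u i) = p (Suc i) * \<sigma> (v (Suc i))))"
  using assms(1) unfolding choice_of_generators_def by (simp add: loop_path_zigzag_word_iff)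

end
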